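(* For any instance of the data described in the context, $\hat{\mathcal A}^*_{SOCP}\subseteq\hat{\mathcal A}_{SDP}$, where $\hat{\cdot}$ denotes projection onto the coordinates $(p^g,q^g)$.
   Context: Data: finite bus set $\mathcal B$, line set $\mathcal L$ (unordered pairs of distinct buses; variables $c_{ij},s_{ij}$ indexed by ordered pairs with $\{i,j\}\in\mathcal L$), $\delta(i)$ the neighbors of $i$, generator set $\mathcal G\subseteq\mathcal B$, reals $G_{ij},B_{ij}$ (lines), $G_{ii},B_{ii}$ (buses), demands $p_i^d,q_i^d$, voltage bounds $0\le\underline V_i\le\overline V_i$, generator bounds $p_i^{\min}\le p_i^{\max}$, $q_i^{\min}\le q_i^{\max}$ ($i\in\mathcal G$). Variables $p_i^g,q_i^g$ for $i\in\mathcal G$, with $p_i^g=q_i^g=0$ for $i\notin\mathcal G$. (ALT): $p_i^g-p_i^d=G_{ii}c_{ii}+\sum_{j\in\delta(i)}(G_{ij}c_{ij}-B_{ij}s_{ij})$, $q_i^g-q_i^d=-B_{ii}c_{ii}+\sum_{j\in\delta(i)}(-B_{ij}c_{ij}-G_{ij}s_{ij})$, $\underline V_i^2\le c_{ii}\le\overline V_i^2$ ($i\in\mathcal B$); $c_{ij}=c_{ji}$, $s_{ij}=-s_{ji}$ (lines); $p_i^{\min}\le p_i^g\le p_i^{\max}$, $q_i^{\min}\le q_i^g\le q_i^{\max}$ ($i\in\mathcal G$). $\mathcal A^*_{SOCP}$: set of $(p^g,q^g,c,s)$ satisfying (ALT) and $c_{ij}^2+s_{ij}^2\le c_{ii}c_{jj}$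 for each line. $\mathcal A_{SDP}$: fix one orientation per line and let $z$ be the real vector with components $c_{ij}$ (one per line), $s_{ij}$ (one per line), $c_{ii}$ (one per bus). $\mathcal A_{SDP}$ is the set of $(p^g,q^g,c,s,Z)$ satisfying (ALT), where $Z$ is a real symmetric matrix indexed by the components of $z$ with $Z-zz^T\succeq0$; for each line $Z_{c_{ij},c_{ij}}+Z_{s_{ij},s_{ij}}=Z_{c_{ii},c_{jj}}$, $Z_{c_{ij},c_{ij}}\le(\overline V_i\overline V_j)^2$, $Z_{s_{ij},s_{ij}}\le(\overline V_i\overline V_j)^2$; and for each bus $Z_{c_{ii},c_{ii}}\le(\underline V_i^2+\overline V_i^2)c_{ii}-(\underline V_i\overline V_i)^2$. *)

theory Defs
  imports Complex_Main
begin

text \<open>Buses are elements of type 'b; lines are unordered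
pairs {i,j} of distinct buses. Line conductances/susceptances are given as functions
on ordered pairs (Gl i j, Bl i j), bus shunt values as Gb i, Bb i.\<close>

record 'b opf_data =
  buses :: "'b set"
  lines :: "'b set set"
  gens  :: "'b set"
  Gl :: "'b \<Rightarrow> 'b \<Rightarrow> real"
  Bl :: "'b \<Rightarrow> 'b \<Rightarrow> real"
  Gb :: "'b \<Rightarrow> real"
  Bb :: "'b \<Rightarrow> real"
  pd :: "'b \<Rightarrow> real"
  qd :: "'b \<Rightarrow> real"
  vlo :: "'b \<Rightarrow> real"
  vhi :: "'b \<Rightarrow> real"
  pmin :: "'b \<Rightarrow> real"
  pmax :: "'b \<Rightarrow> real"
  qmin :: "'b \<Rightarrow> real"
  qmax :: "'b \<Rightarrow> real"

definition nbrs :: "'b opf_data \<Rightarrow> 'b \<Rightarrow> 'b set" where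
  "nbrs D i = {j. {i, j} \<in> lines D}"

definition wf_data :: "'b opf_data \<Rightarrow> bool" where
  "wf_data D \<longleftrightarrow> finite (buses D) \<and>
     (\<forall>e\<in>lines D. \<exists>i j. i \<in> buses D \<and> j \<in> buses D \<and> i \<noteq> j \<and> e = {i, j}) \<and>
     gens D \<subseteq> buses D \<and>
     (\<forall>i\<in>buses D. 0 \<le> vlo D i \<and> vlo D i \<le> vhi D i) \<and>
     (\<forall>i\<in>gens D. pmin D i \<le> pmax D i \<and> qmin D i \<le> qmax D i)"

definition orientation :: "'b opf_data \<Rightarrow> ('b \<times> 'b) set \<Rightarrow> bool" where
  "orientation D Ori \<longleftrightarrow> (\<forall>(i, j)\<in>Ori. {i, j} \<in> lines D) \<and>
     (\<forall>e\<in>lines D. \<exists>!p. p \<in> Ori \<and> {fst p, snd p} = e)"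

text \<open>The constraint system (ALT); c i i plays the role of c_ii.\<close>
definition ALT :: "'b opf_data \<Rightarrow> ('b \<Rightarrow> real) \<Rightarrow> ('b \<Rightarrow> real)
                    \<Rightarrow> ('b \<Rightarrow> 'b \<Rightarrow> real) \<Rightarrow> ('b \<Rightarrow> 'b \<Rightarrow> real) \<Rightarrow> bool" where
  "ALT D pg qg c s \<longleftrightarrow>
     (\<forall>i\<in>buses D - gens D. pg i = 0 \<and> qg i = 0) \<and>
     (\<forall>i\<in>buses D.
        pg i - pd D i = Gb D i * c i i + (\<Sum>j\<in>nbrs D i. Gl D i j * c i j - Bl D i j * s i j) \<and>
        qg i - qd D i = - Bb D i * c i i + (\<Sum>j\<in>nbrs D i. - Bl D i j * c i j - Gl D i j * s i j) \<and>
        (vlo D i)\<^sup>2 \<le> c i i \<and> c i i \<le> (vhi D i)\<^sup>2) \<and>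
     (\<forall>i j. {i, j} \<in> lines D \<longrightarrow> c i j = c j i \<and> s i j = - s j i) \<and>
     (\<forall>i\<in>gens D. pmin D i \<le> pg i \<and> pg i \<le> pmax D i \<and> qmin D i \<le> qg i \<and> qg i \<le> qmax D i)"

definition A_SOCP :: "'b opf_data \<Rightarrow>
    (('b \<Rightarrow> real) \<times> ('b \<Rightarrow> real) \<times> ('b \<Rightarrow> 'b \<Rightarrow> real) \<times> ('b \<Rightarrow> 'b \<Rightarrow> real)) set" where
  "A_SOCP D = {(pg, qg, c, s). ALT D pg qg c s \<and>
      (\<forall>i j. {i, j} \<in> lines D \<longrightarrow> (c i j)\<^sup>2 + (s i j)\<^sup>2 \<le> c i i * c j j)}"

datatype 'b zidx = Cl 'b 'b | Sl 'b 'b | Cb 'b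

definition zindex :: "'b opf_data \<Rightarrow> ('b \<times> 'b) set \<Rightarrow> 'b zidx set" where
  "zindex D Ori = (\<lambda>(i, j). Cl i j) ` Ori \<union> (\<lambda>(i, j). Sl i j) ` Ori \<union> Cb ` buses D"

definition zvec :: "('b \<Rightarrow> 'b \<Rightarrow> real) \<Rightarrow> ('b \<Rightarrow> 'b \<Rightarrow> real) \<Rightarrow> 'b zidx \<Rightarrow> real" where
  "zvec c s k = (case k of Cl i j \<Rightarrow> c i j | Sl i j \<Rightarrow> s i j | Cb i \<Rightarrow> c i i)"

definition psd_on :: "'a set \<Rightarrow> ('a \<Rightarrow> 'a \<Rightarrow> real) \<Rightarrow> bool" where
  "psd_on I M \<longleftrightarrow> (\<forall>a\<in>I. \<forall>b\<in>I. M a b = M b a) \<and>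
     (\<forall>v. 0 \<le> (\<Sum>a\<in>I. \<Sum>b\<in>I. v a * M a b * v b))"

definition A_SDP :: "'b opf_data \<Rightarrow> ('b \<times> 'b) set \<Rightarrow>
    (('b \<Rightarrow> real) \<times> ('b \<Rightarrow> real) \<times> ('b \<Rightarrow> 'b \<Rightarrow> real) \<times> ('b \<Rightarrow> 'b \<Rightarrow> real)
      \<times> ('b zidx \<Rightarrow> 'b zidx \<Rightarrow> real)) set" where
  "A_SDP D Ori = {(pg, qg, c, s, Z). ALT D pg qg c s \<and>
      (\<forall>a\<in>zindex D Ori. \<forall>b\<in>zindex D Ori. Z a b = Z b a) \<and>
      psd_on (zindex D Ori) (\<lambda>a b. Z a b - zvec c s a * zvec c s b) \<and>
      (\<forall>(i, j)\<in>Ori. Z (Cl i j) (Cl i j) + Z (Sl i j) (Sl i j) = Z (Cb i) (Cb j) \<and>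
                  Z (Cl i j) (Cl i j) \<le> (vhi D i * vhi D j)\<^sup>2 \<and>
                  Z (Sl i j) (Sl i j) \<le> (vhi D i * vhi D j)\<^sup>2) \<and>
      (\<forall>i\<in>buses D. Z (Cb i) (Cb i) \<le> ((vlo D i)\<^sup>2 + (vhi D i)\<^sup>2) * c i i - (vlo D i * vhi D i)\<^sup>2)}"

definition proj_SOCP where
  "proj_SOCP D = (\<lambda>(pg, qg, c, s). (pg, qg)) ` A_SOCP D"

definition proj_SDP where
  "proj_SDP D Ori = (\<lambda>(pg, qg, c, s, Z). (pg, qg)) ` A_SDP D Ori"

end

theory Submission
  imports Defs
begin

text \<open>An SOCP point (p, q, c, s) is lifted by Z = z z^T + \<Delta>, where the diagonal correction
  \<Delta> vanishes except at the entries (c_ij, c_ij), where it is the slack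
  c_ii c_jj - c_ij^2 - s_ij^2 \<ge> 0 of the rotated cone constraint. Then Z - z z^T is a
  nonnegative diagonal matrix, Z(c_ij,c_ij) + Z(s_ij,s_ij) = c_ii c_jj = Z(c_ii,c_jj) by the
  choice of the slack, and the remaining bounds follow from lo_i^2 \<le> c_ii \<le> hi_i^2; the one on
  Z(c_ii,c_ii) = c_ii^2 is the secant inequality for the square on that interval.\<close>

lemma psd_on_diagonal:
  fixes d :: "'a \<Rightarrow> real"
  assumes "\<forall>a\<in>I. 0 \<le> d a"
  shows "psd_on I (\<lambda>a b. if a = b then d a else 0)"
proof -
  have "(\<Sum>b\<in>I. v a * (if a = b then d a else 0) * v b) = (if finite I \<and> a \<in> I then d a * (v a)\<^sup>2 else 0)"
    for v a
    by (cases "finite I") (auto simp: if_distrib if_distribR power2_eq_square sum.delta cong: if_cong)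
  then have "(\<Sum>a\<in>I. \<Sum>b\<in>I. v a * (if a = b then d a else 0) * v b) = (\<Sum>a\<in>I. d a * (v a)\<^sup>2)" for v
    by (cases "finite I") auto
  then show ?thesis
    using assms unfolding psd_on_def by (simp add: sum_nonneg)
qed

lemma square_le_secant:
  fixes x lo hi :: real
  assumes "lo\<^sup>2 \<le> x" and "x \<le> hi\<^sup>2"
  shows "x * x \<le> (lo\<^sup>2 + hi\<^sup>2) * x - (lo * hi)\<^sup>2"
proof -
  have "0 \<le> (hi\<^sup>2 - x) * (x - lo\<^sup>2)"
    using assms by simp
  then show ?thesis
    by (simp add: algebra_simps power2_eq_square)
qed

lemma orientation_in_lines:
  "orientation D Ori \<Longrightarrow> (i, j) \<in> Ori \<Longrightarrow> {i, j} \<in> lines D"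
  unfolding orientation_def by auto

lemma wf_data_line_buses:
  assumes "wf_data D" and "{i, j} \<in> lines D"
  shows "i \<in> buses D" and "j \<in> buses D"
  using assms unfolding wf_data_def by (auto simp: doubleton_eq_iff)

lemma ALT_bus_bounds:
  assumes "ALT D pg qg c s" and "i \<in> buses D"
  shows "(vlo D i)\<^sup>2 \<le> c i i" and "c i i \<le> (vhi D i)\<^sup>2"
  using assms unfolding ALT_def by auto

definition cone_slack :: "('b \<Rightarrow> 'b \<Rightarrow> real) \<Rightarrow> ('b \<Rightarrow> 'b \<Rightarrow> real) \<Rightarrow> 'b zidx \<Rightarrow> real" where
  "cone_slack c s k =
     (case k of Cl i j \<Rightarrow> c i i * c j j - (c i j)\<^sup>2 - (s i j)\<^sup>2 | _ \<Rightarrow> 0)"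

definition socp_lift :: "('b \<Rightarrow> 'b \<Rightarrow> real) \<Rightarrow> ('b \<Rightarrow> 'b \<Rightarrow> real) \<Rightarrow> 'b zidx \<Rightarrow> 'b zidx \<Rightarrow> real" where
  "socp_lift c s a b = zvec c s a * zvec c s b + (if a = b then cone_slack c s a else 0)"

lemma socp_lift_minus_outer:
  "(\<lambda>a b. socp_lift c s a b - zvec c s a * zvec c s b) = (\<lambda>a b. if a = b then cone_slack c s a else 0)"
  unfolding socp_lift_def by auto

lemma socp_lift_entries:
  "socp_lift c s (Cl i j) (Cl i j) = c i i * c j j - (s i j)\<^sup>2"
  "socp_lift c s (Sl i j) (Sl i j) = (s i j)\<^sup>2"
  "socp_lift c s (Cb i) (Cb j) = c i i * c j j"
  "socp_lift c s (Cb i) (Cb i) = c i i * c i i"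
  unfolding socp_lift_def cone_slack_def zvec_def by (simp_all add: power2_eq_square)

lemma A_SOCP_lift_in_A_SDP:
  assumes D: "wf_data D" and Ori: "orientation D Ori"
    and socp: "(pg, qg, c, s) \<in> A_SOCP D"
  shows "(pg, qg, c, s, socp_lift c s) \<in> A_SDP D Ori"
proof -
  have alt: "ALT D pg qg c s"
    and cone: "\<And>i j. {i, j} \<in> lines D \<Longrightarrow> (c i j)\<^sup>2 + (s i j)\<^sup>2 \<le> c i i * c j j"
    using socp unfolding A_SOCP_def by auto
  have slack_nonneg: "\<forall>a\<in>zindex D Ori. 0 \<le> cone_slack c s a"
    using cone orientation_in_lines[OF Ori] unfolding zindex_def cone_slack_def
    by (fastforce simp: algebra_simps)
  have line_bounds: "socp_lift c s (Cl i j) (Cl i j) + socp_lift c s (Sl i j) (Sl i j)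
                       = socp_lift c s (Cb i) (Cb j)
                     \<and> socp_lift c s (Cl i j) (Cl i j) \<le> (vhi D i * vhi D j)\<^sup>2
                     \<and> socp_lift c s (Sl i j) (Sl i j) \<le> (vhi D i * vhi D j)\<^sup>2"
    if "(i, j) \<in> Ori" for i j
  proof -
    have line: "{i, j} \<in> lines D"
      using orientation_in_lines[OF Ori that] .
    note bi = ALT_bus_bounds[OF alt wf_data_line_buses(1)[OF D line]]
    note bj = ALT_bus_bounds[OF alt wf_data_line_buses(2)[OF D line]]
    have "c i i * c j j \<le> (vhi D i)\<^sup>2 * (vhi D j)\<^sup>2"
      using bi bj by (intro mult_mono) (auto intro: order_trans[OF zero_le_power2])
    then have "c i i * c j j \<le> (vhi D i * vhi D j)\<^sup>2"
      by (simp add: power_mult_distrib)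
    then show ?thesis
      unfolding socp_lift_entries
      using cone[OF line] zero_le_power2[of "s i j"] zero_le_power2[of "c i j"] by linarith
  qed
  have bus_bound: "socp_lift c s (Cb i) (Cb i) \<le> ((vlo D i)\<^sup>2 + (vhi D i)\<^sup>2) * c i i - (vlo D i * vhi D i)\<^sup>2"
    if "i \<in> buses D" for i
    using square_le_secant[OF ALT_bus_bounds[OF alt that]] by (simp add: socp_lift_entries)
  show ?thesis
    unfolding A_SDP_def
    using alt psd_on_diagonal[OF slack_nonneg] line_bounds bus_bound
    by (auto simp: socp_lift_minus_outer socp_lift_def)
qed

theorem proposition4:
  fixes D :: "'b opf_data" and Ori :: "('b \<times> 'b) set"
  assumes "wf_data D" and "orientation D Ori"
  shows "proj_SOCP D \<subseteq> proj_SDP D Ori"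
proof
  fix x assume "x \<in> proj_SOCP D"
  then obtain pg qg c s where x: "x = (pg, qg)" and "(pg, qg, c, s) \<in> A_SOCP D"
    unfolding proj_SOCP_def by auto
  then have "(pg, qg, c, s, socp_lift c s) \<in> A_SDP D Ori"
    using A_SOCP_lift_in_A_SDP assms by blast
  then show "x \<in> proj_SDP D Ori"
    unfolding proj_SDP_def x by force
qed

end
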